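(* For any fixed $s\in[0,1)$, as $n\to\infty$, $$\theta^*_n(s)=\frac{1}{1+\frac{\kappa}{(n-1)(1-s)}}+o\Big(\frac1n\Big),$$ where $\kappa\approx0.80435$ is the positive solution of $\sum_{k\ge1}\frac{\kappa^k}{k!\,k}=1$.
   Context: For $n\ge2$ and $s\in[0,1)$, $\theta^*_n(s)$ is the unique solution in $(0,1)$ of $\int_s^1\frac{(1-t+t\theta^*_n(s))^{n-1}-\theta^*_n(s)^{n-1}}{1-t}\,\mathrm dt=\theta^*_n(s)^{n-1}$. *)

theory Defs
  imports "HOL-Analysis.Analysis" "HOL-Library.Landau_Symbols"
begin

definition theta_star :: "nat \<Rightarrow> real \<Rightarrow> real" where
  "theta_star n s = (THE th. 0 < th \<and> th < 1 \<and>
     integral {s..1} (\<lambda>t. ((1 - t + t * th) ^ (n - 1) - th ^ (n - 1)) / (1 - t))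
       = th ^ (n - 1))"

definition kappa :: real where
  "kappa = (THE k. 0 < k \<and> (\<Sum>j. k ^ (Suc j) / (fact (Suc j) * real (Suc j))) = 1)"

end

theory Submission
  imports Defs
begin

(* Put m = n - 1. Expanding (1 - t + t theta)^m - theta^m binomially in powers of
   (1 - t)(1 - theta) and integrating termwise turns the defining equation of theta into
   kappa_poly m x = 1 with x = m (1 - s)(1 - theta) / theta. As kappa_poly m is increasing,
   theta = 1 / (1 + x_m / (m (1 - s))) for its unique positive root x_m. The coefficients
   C(m,k) k! / m^k of kappa_poly m lie in [0,1] and tend to 1, so by Tannery's theorem
   kappa_poly m converges pointwise to kappa_series, whose root is kappa; monotonicity then
   forces x_m --> kappa, and the error is at most |x_m - kappa| / (m (1 - s)) = o(1/n). *)

definition kappa_series :: "real \<Rightarrow> real" where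
  "kappa_series x = (\<Sum>j. x ^ Suc j / (fact (Suc j) * real (Suc j)))"

definition kappa_poly :: "nat \<Rightarrow> real \<Rightarrow> real" where
  "kappa_poly m x = (\<Sum>j<m. real (m choose Suc j) * (x / real m) ^ Suc j / real (Suc j))"

definition kappa_poly_root :: "nat \<Rightarrow> real" where
  "kappa_poly_root m = (THE x. 0 < x \<and> kappa_poly m x = 1)"

lemma power_add_mult_minus_power:
  fixes a b u :: "'a::comm_ring_1"
  shows "(a + u * b) ^ m - a ^ m
    = u * (\<Sum>j<m. of_nat (m choose Suc j) * b ^ Suc j * a ^ (m - Suc j) * u ^ j)"
proof -
  have "(u * b + a) ^ m = (\<Sum>k\<le>m. of_nat (m choose k) * (u * b) ^ k * a ^ (m - k))"
    by (rule binomial_ring)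
  also have "\<dots> = a ^ m + (\<Sum>j<m. of_nat (m choose Suc j) * (u * b) ^ Suc j * a ^ (m - Suc j))"
    by (simp add: sum.atMost_shift)
  finally show ?thesis
    by (simp add: sum_distrib_left algebra_simps)
qed

lemma integral_power_diff_quotient:
  fixes s th :: real
  assumes "s \<le> 1"
  shows "integral {s..1} (\<lambda>t. ((1 - t + t * th) ^ m - th ^ m) / (1 - t))
    = (\<Sum>j<m. real (m choose Suc j) * (1 - th) ^ Suc j * th ^ (m - Suc j) * (1 - s) ^ Suc j / real (Suc j))"
proof -
  define c where "c j = real (m choose Suc j) * (1 - th) ^ Suc j * th ^ (m - Suc j)" for j
  define p where "p t = (\<Sum>j<m. c j * (1 - t) ^ j)" for t
  define P where "P t = - (\<Sum>j<m. c j * (1 - t) ^ Suc j / real (Suc j))" for t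
  have "(P has_real_derivative p t) (at t)" for t
  proof -
    have "((\<lambda>t. c j * (1 - t) ^ Suc j / real (Suc j)) has_real_derivative - (c j * (1 - t) ^ j)) (at t)" for j
    proof -
      have "((\<lambda>t. (1 - t) ^ Suc j) has_real_derivative (1 + real j) * (- 1 * (1 - t) ^ j)) (at t)"
        by (intro DERIV_power_Suc derivative_eq_intros) auto
      from DERIV_cdivide[OF DERIV_cmult[OF this, of "c j"], of "real (Suc j)"] show ?thesis
        by (rule DERIV_cong) (simp add: field_simps)
    qed
    then have "((\<lambda>t. \<Sum>j<m. c j * (1 - t) ^ Suc j / real (Suc j)) has_real_derivative
        (\<Sum>j<m. - (c j * (1 - t) ^ j))) (at t)"
      by (rule DERIV_sum)
    from DERIV_minus[OF this] show ?thesis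
      by (simp add: P_def[abs_def] p_def sum_negf)
  qed
  then have "(p has_integral P 1 - P s) {s..1}"
    using assms by (intro fundamental_theorem_of_calculus)
      (auto simp: has_real_derivative_iff_has_vector_derivative has_vector_derivative_at_within)
  moreover have "p t = ((1 - t + t * th) ^ m - th ^ m) / (1 - t)" if "t \<noteq> 1" for t
  proof -
    have "(1 - t + t * th) ^ m - th ^ m = (th + (1 - t) * (1 - th)) ^ m - th ^ m"
      by (simp add: algebra_simps)
    also have "\<dots> = (1 - t) * p t"
      unfolding power_add_mult_minus_power p_def c_def by simp
    finally show ?thesis
      using that by simp
  qed
  ultimately have "((\<lambda>t. ((1 - t + t * th) ^ m - th ^ m) / (1 - t)) has_integral P 1 - P s) {s..1}"
    by (subst has_integral_spike_finite_eq[of "{1}" _ p]) auto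
  then show ?thesis
    by (simp add: integral_unique P_def c_def)
qed

lemma integral_power_diff_quotient_kappa_poly:
  fixes s th :: real
  assumes "s \<le> 1" "th \<noteq> 0"
  shows "integral {s..1} (\<lambda>t. ((1 - t + t * th) ^ m - th ^ m) / (1 - t))
    = th ^ m * kappa_poly m (real m * ((1 - s) * (1 - th) / th))"
proof (cases "m = 0")
  case False
  define y where "y = (1 - s) * (1 - th) / th"
  have "real m * y / real m = y"
    using False by simp
  moreover have "th ^ m * y ^ Suc j = (1 - th) ^ Suc j * th ^ (m - Suc j) * (1 - s) ^ Suc j"
    if "j < m" for j
  proof -
    have "th ^ m = th ^ (m - Suc j) * th ^ Suc j"
      by (subst power_add[symmetric]) (use that in simp)
    then show ?thesis
      using assms(2) by (simp add: y_def power_divide power_mult_distrib)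
  qed
  ultimately show ?thesis
    unfolding integral_power_diff_quotient[OF assms(1)] kappa_poly_def y_def[symmetric] sum_distrib_left
    by (intro sum.cong) (simp_all add: mult_ac)
qed (simp add: kappa_poly_def)

lemma ex1_pos_root_strict_mono_on:
  fixes f :: "real \<Rightarrow> real"
  assumes "strict_mono_on {0..} f" "continuous_on {0..} f" "f 0 < c" "c \<le> f b" "0 \<le> b"
  shows "\<exists>!x. 0 < x \<and> f x = c"
proof -
  obtain x where "0 \<le> x" "x \<le> b" "f x = c"
    using IVT'[of f 0 c b] assms continuous_on_subset[OF assms(2)] by fastforce
  moreover have "x \<noteq> 0"
    using assms(3) \<open>f x = c\<close> by auto
  ultimately show ?thesis
    using strict_mono_on_eqD[OF assms(1)] by (intro ex1I[of _ x]) auto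
qed

lemma summable_kappa_series_coeffs:
  "summable (\<lambda>j. inverse (fact (Suc j) * real (Suc j)) * x ^ j)"
proof (rule summable_comparison_test[OF _ summable_exp[of "\<bar>x\<bar>"]])
  show "\<exists>N. \<forall>j\<ge>N. norm (inverse (fact (Suc j) * real (Suc j)) * x ^ j) \<le> inverse (fact j) * \<bar>x\<bar> ^ j"
  proof (intro exI allI impI)
    fix j :: nat
    have "fact j * 1 \<le> fact j * (real (Suc j) * real (Suc j))"
      using mult_mono[of 1 "real (Suc j)" 1 "real (Suc j)"] by (intro mult_left_mono) simp_all
    then have "inverse (fact (Suc j) * real (Suc j)) \<le> (inverse (fact j) :: real)"
      by (intro le_imp_inverse_le) (simp_all add: algebra_simps)
    then have "inverse (fact (Suc j) * real (Suc j)) * \<bar>x\<bar> ^ j \<le> inverse (fact j) * \<bar>x\<bar> ^ j"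
      by (rule mult_right_mono) simp
    then show "norm (inverse (fact (Suc j) * real (Suc j)) * x ^ j) \<le> inverse (fact j) * \<bar>x\<bar> ^ j"
      by (simp add: abs_mult power_abs)
  qed
qed

lemma kappa_series_eq_powser:
  "kappa_series x = x * (\<Sum>j. inverse (fact (Suc j) * real (Suc j)) * x ^ j)"
  unfolding kappa_series_def suminf_mult[OF summable_kappa_series_coeffs, symmetric]
  by (simp add: field_simps)

lemma summable_kappa_series: "summable (\<lambda>j. x ^ Suc j / (fact (Suc j) * real (Suc j)))"
  using summable_mult[OF summable_kappa_series_coeffs, of x x] by (simp add: field_simps)

lemma continuous_on_kappa_series: "continuous_on A kappa_series"
  unfolding kappa_series_eq_powser[abs_def]
  by (intro continuous_at_imp_continuous_on ballI continuous_intros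
      isCont_powser_converges_everywhere summable_kappa_series_coeffs)

lemma strict_mono_on_kappa_series: "strict_mono_on {0..} kappa_series"
proof (rule strict_mono_onI)
  fix x y :: real
  assume "x \<in> {0..}" "x < y"
  then have "0 < (\<Sum>j. y ^ Suc j / (fact (Suc j) * real (Suc j)) - x ^ Suc j / (fact (Suc j) * real (Suc j)))"
    by (intro suminf_pos2[where i = 0] summable_diff summable_kappa_series)
      (auto intro!: divide_right_mono power_mono simp del: power_Suc)
  then show "kappa_series x < kappa_series y"
    unfolding kappa_series_def suminf_diff[OF summable_kappa_series summable_kappa_series, symmetric]
    by simp
qed

lemma kappa_pos_root: "0 < kappa" "kappa_series kappa = 1"
proof -
  have "(\<Sum>j<1. 1 ^ Suc j / (fact (Suc j) * real (Suc j))) \<le> kappa_series 1"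
    unfolding kappa_series_def by (rule sum_le_suminf[OF summable_kappa_series]) auto
  then have "\<exists>!k. 0 < k \<and> kappa_series k = 1"
    by (intro ex1_pos_root_strict_mono_on[OF strict_mono_on_kappa_series continuous_on_kappa_series, of 1 1])
      (auto simp: kappa_series_def)
  from theI'[OF this] show "0 < kappa" "kappa_series kappa = 1"
    unfolding kappa_def kappa_series_def[abs_def] by auto
qed

lemma continuous_on_kappa_poly: "continuous_on A (kappa_poly m)"
  unfolding kappa_poly_def by (intro continuous_intros) auto

lemma strict_mono_on_kappa_poly:
  assumes "0 < m"
  shows "strict_mono_on {0..} (kappa_poly m)"
proof (rule strict_mono_onI)
  fix x y :: real
  assume "x \<in> {0..}" "x < y"
  then show "kappa_poly m x < kappa_poly m y"
    unfolding kappa_poly_def using assms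
    by (intro sum_strict_mono_ex1 bexI[of _ 0])
      (auto intro!: divide_right_mono mult_left_mono power_mono simp del: power_Suc)
qed

lemma ex1_kappa_poly_root:
  assumes "0 < m"
  shows "\<exists>!x. 0 < x \<and> kappa_poly m x = 1"
proof (rule ex1_pos_root_strict_mono_on[OF strict_mono_on_kappa_poly[OF assms] continuous_on_kappa_poly])
  have "real (m choose Suc 0) * (real m / real m) ^ Suc 0 / real (Suc 0) \<le> kappa_poly m (real m)"
    unfolding kappa_poly_def by (rule member_le_sum) (use assms in auto)
  then show "1 \<le> kappa_poly m (real m)"
    using assms by simp
qed (simp_all add: kappa_poly_def)

lemma kappa_poly_root_pos_root:
  assumes "0 < m"
  shows "0 < kappa_poly_root m" "kappa_poly m (kappa_poly_root m) = 1"
  using theI'[OF ex1_kappa_poly_root[OF assms]] unfolding kappa_poly_root_def by auto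

lemma of_nat_choose_mult_fact: "real (m choose k) * fact k = (\<Prod>i<k. real m - real i)"
proof (induction k)
  case (Suc k)
  have "real (m choose Suc k) * real (Suc k) = (real m - real k) * real (m choose k)"
  proof (cases "k < m")
    case True
    then have "(m choose Suc k) * Suc k = (m - k) * (m choose k)"
      using binomial_absorb_comp[of m k] Suc_times_binomial_eq[of "m - 1" k] by simp
    then have "real ((m choose Suc k) * Suc k) = real ((m - k) * (m choose k))"
      by (rule arg_cong)
    then show ?thesis
      using True by (simp add: algebra_simps)
  qed (cases "k = m", simp_all add: binomial_eq_0)
  then have "real (m choose Suc k) * fact (Suc k) = (real m - real k) * (real (m choose k) * fact k)"
    by (simp add: mult.assoc[symmetric] del: of_nat_Suc)
  then show ?case
    unfolding Suc.IH by (simp add: mult.commute)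
qed simp

lemma choose_mult_fact_div_power_tendsto:
  "(\<lambda>m. real (m choose k) * fact k / real m ^ k) \<longlonglongrightarrow> 1"
proof -
  have "(\<lambda>m. \<Prod>i<k. 1 - real i / real m) \<longlonglongrightarrow> (\<Prod>i<k. 1 - 0)"
    by (intro tendsto_prod tendsto_diff tendsto_const lim_const_over_n)
  then have "(\<lambda>m. \<Prod>i<k. 1 - real i / real m) \<longlonglongrightarrow> 1"
    by simp
  moreover have "\<forall>\<^sub>F m in sequentially. (\<Prod>i<k. 1 - real i / real m) = real (m choose k) * fact k / real m ^ k"
    using eventually_gt_at_top[of 0]
  proof eventually_elim
    case (elim m)
    have "(\<Prod>i<k. 1 - real i / real m) = (\<Prod>i<k. (real m - real i) / real m)"
      using elim by (intro prod.cong) (simp_all add: diff_divide_distrib)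
    also have "\<dots> = real (m choose k) * fact k / real m ^ k"
      by (simp add: of_nat_choose_mult_fact prod_dividef)
    finally show ?case .
  qed
  ultimately show ?thesis
    by (rule Lim_transform_eventually)
qed

lemma kappa_poly_tendsto: "(\<lambda>m. kappa_poly m x) \<longlonglongrightarrow> kappa_series x"
proof -
  define w where "w j = x ^ Suc j / (fact (Suc j) * real (Suc j))" for j
  define a where "a j m = real (m choose Suc j) * fact (Suc j) / real m ^ Suc j * w j" for j m
  have "kappa_poly m x = (\<Sum>j. a j m)" for m
  proof -
    have "a j m = real (m choose Suc j) * (x / real m) ^ Suc j / real (Suc j)" for j
      by (cases "m = 0") (simp_all add: a_def w_def power_divide del: of_nat_Suc fact_Suc)
    then show ?thesis
      unfolding kappa_poly_def by (subst suminf_finite[of "{..<m}"]) (auto simp: binomial_eq_0)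
  qed
  moreover have "(\<lambda>m. \<Sum>j. a j m) \<longlonglongrightarrow> (\<Sum>j. 1 * w j)"
  proof (rule tannerys_theorem[THEN conjunct2, THEN conjunct2])
    show "(\<lambda>m. a j m) \<longlonglongrightarrow> 1 * w j" for j
      unfolding a_def by (intro tendsto_mult_right choose_mult_fact_div_power_tendsto)
    have "real (m choose Suc j) * fact (Suc j) \<le> real m ^ Suc j" for m j
      using binomial_fact_pow[of m "Suc j"] by (metis of_nat_fact of_nat_le_iff of_nat_mult of_nat_power)
    then have "\<bar>real (m choose Suc j) * fact (Suc j) / real m ^ Suc j\<bar> \<le> 1" for m j
      by (cases "m = 0") (simp_all add: divide_le_eq_1)
    then have "norm (a j m) \<le> norm (w j)" for j m
      unfolding a_def abs_mult real_norm_def by (intro mult_left_le_one_le) simp_all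
    then have "norm (a j m) \<le> \<bar>x\<bar> ^ Suc j / (fact (Suc j) * real (Suc j))" for j m
      by (simp add: w_def power_abs abs_mult)
    then show "\<forall>\<^sub>F (j, m) in at_top \<times>\<^sub>F sequentially. norm (a j m) \<le> \<bar>x\<bar> ^ Suc j / (fact (Suc j) * real (Suc j))"
      by (intro always_eventually) auto
  qed (use summable_kappa_series in simp_all)
  ultimately show ?thesis
    by (simp add: kappa_series_def w_def)
qed

lemma tendsto_root_of_pointwise_tendsto:
  fixes f :: "nat \<Rightarrow> real \<Rightarrow> real" and g :: "real \<Rightarrow> real"
  assumes roots: "\<forall>\<^sub>F m in sequentially. mono_on {0..} (f m) \<and> 0 \<le> r m \<and> f m (r m) = c"
    and lim: "\<And>x. 0 \<le> x \<Longrightarrow> (\<lambda>m. f m x) \<longlonglongrightarrow> g x"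
    and g: "strict_mono_on {0..} g" "0 \<le> k" "g k = c"
  shows "r \<longlonglongrightarrow> k"
proof (rule order_tendstoI)
  fix a assume "a < k"
  show "\<forall>\<^sub>F m in sequentially. a < r m"
  proof (cases "a < 0")
    case False
    then have "g a < c"
      using strict_mono_onD[OF g(1), of a k] g \<open>a < k\<close> by simp
    then have "\<forall>\<^sub>F m in sequentially. f m a < c"
      using order_tendstoD(2)[OF lim] False by simp
    with roots show ?thesis
    proof eventually_elim
      case (elim m)
      then show ?case
        using mono_onD[of "{0..}" "f m" "r m" a] False by force
    qed
  qed (use roots in \<open>auto elim: eventually_mono\<close>)
next
  fix a assume "k < a"
  then have "c < g a"
    using strict_mono_onD[OF g(1), of k a] g by simp
  then have "\<forall>\<^sub>F m in sequentially. c < f m a"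
    using order_tendstoD(1)[OF lim] \<open>k < a\<close> g(2) by simp
  with roots show "\<forall>\<^sub>F m in sequentially. r m < a"
  proof eventually_elim
    case (elim m)
    then show ?case
      using mono_onD[of "{0..}" "f m" a "r m"] \<open>k < a\<close> g(2) by force
  qed
qed

lemma kappa_poly_root_tendsto: "kappa_poly_root \<longlonglongrightarrow> kappa"
proof (rule tendsto_root_of_pointwise_tendsto[where g = kappa_series])
  show "\<forall>\<^sub>F m in sequentially. mono_on {0..} (kappa_poly m) \<and> 0 \<le> kappa_poly_root m \<and> kappa_poly m (kappa_poly_root m) = 1"
    using eventually_gt_at_top[of 0]
    by eventually_elim (auto intro: strict_mono_on_imp_mono_on strict_mono_on_kappa_poly dest: kappa_poly_root_pos_root)
qed (use kappa_poly_tendsto strict_mono_on_kappa_series kappa_pos_root in auto)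

lemma theta_star_Suc:
  assumes "0 \<le> s" "s < 1" "0 < m"
  shows "theta_star (Suc m) s = 1 / (1 + kappa_poly_root m / (real m * (1 - s)))"
proof -
  define r where "r = kappa_poly_root m"
  have r: "0 < r" "kappa_poly m r = 1"
    using kappa_poly_root_pos_root[OF assms(3)] by (simp_all add: r_def)
  define D where "D = real m * (1 - s)"
  have "0 < D"
    using assms by (simp add: D_def)
  define th0 where "th0 = D / (D + r)"
  have th0: "0 < th0" "th0 < 1"
    using \<open>0 < D\<close> r by (simp_all add: th0_def)
  have defining_eq_iff:
    "integral {s..1} (\<lambda>t. ((1 - t + t * th) ^ m - th ^ m) / (1 - t)) = th ^ m \<longleftrightarrow> th = th0"
    if "0 < th" "th < 1" for th
  proof -
    define x where "x = real m * ((1 - s) * (1 - th) / th)"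
    have "0 < x"
      using that assms by (simp add: x_def)
    have "integral {s..1} (\<lambda>t. ((1 - t + t * th) ^ m - th ^ m) / (1 - t)) = th ^ m
        \<longleftrightarrow> kappa_poly m x = 1"
      using integral_power_diff_quotient_kappa_poly[of s th m] that assms by (simp add: x_def)
    also have "\<dots> \<longleftrightarrow> x = r"
      using ex1_kappa_poly_root[OF assms(3)] r \<open>0 < x\<close> by blast
    also have "\<dots> \<longleftrightarrow> D * (1 - th) = r * th"
      using that by (simp add: x_def D_def divide_eq_eq mult.assoc)
    also have "\<dots> \<longleftrightarrow> th * (D + r) = D"
      by argo
    also have "\<dots> \<longleftrightarrow> th = th0"
      using \<open>0 < D\<close> r by (auto simp: th0_def eq_divide_eq)
    finally show ?thesis .
  qed
  have "theta_star (Suc m) s = th0"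
    unfolding theta_star_def diff_Suc_1
    by (rule the_equality) (use th0 defining_eq_iff in auto)
  also have "th0 = 1 / (1 + r / D)"
    using \<open>0 < D\<close> r by (simp add: th0_def field_simps)
  finally show ?thesis
    by (simp add: r_def D_def)
qed

lemma abs_one_div_one_plus_diff_le:
  fixes a b :: real
  assumes "0 \<le> a" "0 \<le> b"
  shows "\<bar>1 / (1 + a) - 1 / (1 + b)\<bar> \<le> \<bar>a - b\<bar>"
proof -
  have "1 * 1 \<le> (1 + a) * (1 + b)"
    using assms by (intro mult_mono) auto
  then have "\<bar>b - a\<bar> / ((1 + a) * (1 + b)) \<le> \<bar>b - a\<bar>"
    by (simp add: divide_le_eq mult_le_cancel_left1)
  moreover have "1 / (1 + a) - 1 / (1 + b) = (b - a) / ((1 + a) * (1 + b))"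
    using assms by (simp add: field_simps)
  ultimately show ?thesis
    using assms by (simp add: abs_minus_commute)
qed

lemma theta_star_error_bound:
  assumes "0 \<le> s" "s < 1" "0 < m"
  shows "\<bar>theta_star (Suc m) s - 1 / (1 + kappa / (real m * (1 - s)))\<bar>
    \<le> 2 / (1 - s) * \<bar>(kappa_poly_root m - kappa) / real (Suc m)\<bar>"
proof -
  define D where "D = real m * (1 - s)"
  have "0 < D"
    using assms by (simp add: D_def)
  have "\<bar>theta_star (Suc m) s - 1 / (1 + kappa / D)\<bar>
      = \<bar>1 / (1 + kappa_poly_root m / D) - 1 / (1 + kappa / D)\<bar>"
    using theta_star_Suc[OF assms] by (simp add: D_def)
  also have "\<dots> \<le> \<bar>kappa_poly_root m / D - kappa / D\<bar>"
    using \<open>0 < D\<close> kappa_poly_root_pos_root[OF assms(3)] kappa_pos_root(1)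
    by (intro abs_one_div_one_plus_diff_le) simp_all
  also have "\<dots> = \<bar>kappa_poly_root m - kappa\<bar> / D"
    using \<open>0 < D\<close> by (simp add: diff_divide_distrib[symmetric])
  also have "\<dots> = 2 / (1 - s) * (\<bar>kappa_poly_root m - kappa\<bar> / (2 * real m))"
    using assms by (simp add: D_def)
  also have "\<dots> \<le> 2 / (1 - s) * (\<bar>kappa_poly_root m - kappa\<bar> / real (Suc m))"
    using assms by (intro mult_left_mono divide_left_mono) simp_all
  finally show ?thesis
    by (simp add: D_def)
qed

theorem mainTheorem16:
  fixes s :: real
  assumes "0 \<le> s" and "s < 1"
  shows "(\<lambda>n::nat. theta_star n s - 1 / (1 + kappa / ((real n - 1) * (1 - s))))
           \<in> o(\<lambda>n. 1 / real n)"
proof -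
  let ?err = "\<lambda>n. (kappa_poly_root (n - 1) - kappa) / real n"
  have "\<forall>\<^sub>F n in sequentially. norm (theta_star n s - 1 / (1 + kappa / ((real n - 1) * (1 - s))))
      \<le> 2 / (1 - s) * norm (?err n)"
    using eventually_gt_at_top[of 1]
  proof eventually_elim
    case (elim n)
    then obtain m where "n = Suc m" "0 < m"
      by (cases n) auto
    then show ?case
      using theta_star_error_bound[OF assms \<open>0 < m\<close>] by simp
  qed
  then have "(\<lambda>n. theta_star n s - 1 / (1 + kappa / ((real n - 1) * (1 - s)))) \<in> O(?err)"
    by (rule bigoI)
  moreover have "?err \<in> o(\<lambda>n. 1 / real n)"
  proof (rule smalloI_tendsto)
    have "(\<lambda>n. kappa_poly_root (n - 1) - kappa) \<longlonglongrightarrow> 0"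
      using filterlim_compose[OF kappa_poly_root_tendsto filterlim_minus_const_nat_at_top]
      by (rule LIM_zero)
    moreover have "\<forall>\<^sub>F n in sequentially. kappa_poly_root (n - 1) - kappa = ?err n / (1 / real n)"
      using eventually_gt_at_top[of 0] by eventually_elim simp
    ultimately show "(\<lambda>n. ?err n / (1 / real n)) \<longlonglongrightarrow> 0"
      by (rule Lim_transform_eventually)
    show "\<forall>\<^sub>F n in sequentially. 1 / real n \<noteq> 0"
      using eventually_gt_at_top[of 0] by eventually_elim simp
  qed
  ultimately show ?thesis
    by (rule landau_o.big_small_trans)
qed

end
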